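(* Let $r=1$ with single input node $q$ (so $\Pi=\mathbf e_q$), $G\ge0$ entrywise, $\overline\lambda(G)<1$, $\sigma_v^2>0$, and let $(\mathcal S,\{j\},\mathcal P)$ be a node cutset partition with singleton cutset $\{j\}$. Let $\widetilde G=[G_{pp}\ G_{pc}]$. If every row sum of $\widetilde G$ is at most $1$, then for every $j_1\in\mathcal P$: $\mathbb P_{e_m}(j)\le\mathbb P_{e_m}(j_1)$ and $\mathbb P_{e_v}(j)\le\mathbb P_{e_v}(j_1)$. If every row sum of $\widetilde G$ is greater than $1$, then for every $j_1\in\mathcal P$: $\mathbb P_{e_m}(j)\ge\mathbb P_{e_m}(j_1)$ and $\mathbb P_{e_v}(j)\ge\mathbb P_{e_v}(j_1)$.
   Context: $G=[g_{ij}]\in\mathbb R^{n\times n}$. For a single sensor node $l$, $T_l(z)=\mathbf e_l^T(zI-G)^{-1}\mathbf e_q$ (scalar), $\|T_l\|_\infty=\sup_{|z|=1}|T_l(z)|$. The scalar input under $H_i$ has law $\mathcal N(\mu_i,\sigma_i^2)$; $N\in\mathbb N$. Mean shift ($\sigma_1^2=\sigma_2^2=\sigma_c^2>0$, $\mu_\Delta=\mu_2-\mu_1$): $\eta_s(l)^2=N\mu_\Delta^2|T_l(1)|^2/(\sigma_c^2|T_l(1)|^2+\sigma_v^2)$ and $\mathbb P_{e_m}(l)=Q_{\mathcal N}(\eta_s(l)/2)$. Covariance shift ($\mu_1=\mu_2$, $\sigma_1^2>\sigma_2^2\ge0$): $R_s(l)=(\sigma_1^2\|T_l\|_\infty^2+\sigma_v^2)/(\sigma_2^2\|T_l\|_\infty^2+\sigma_v^2)$,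 $\tau(R)=\ln R/(R-1)$ for $R>1$, $\tau(1)=1$, $\mathbb P_{e_v}(l)=\tfrac12[1-Q_{\chi^2}(1,\tau(R_s(l)))]+\tfrac12Q_{\chi^2}(1,\tau(R_s(l))R_s(l))$. $Q_{\mathcal N}(t)=\Pr[Z\ge t]$, $Z\sim\mathcal N(0,1)$; $Q_{\chi^2}(1,t)=\Pr[Y\ge t]$, $Y\sim\chi^2(1)$. Node cutset: a partition $\{1,\dots,n\}=\mathcal S\sqcup\mathcal C\sqcup\mathcal P$ into nonempty sets with the input node $q\in\mathcal S$, $\mathrm{dist}(\{q\},\mathcal C)\ge d$ for some $d\ge1$ (graph distance in the digraph with edges $\{(i,j):g_{ij}\ne0\}$), and $g_{ij}=g_{ji}=0$ for all $i\in\mathcal P$, $j\in\mathcal S$. $G_{pp}$, $G_{pc}$ are the submatrices of $G$ with rows in $\mathcal P$ and columns in $\mathcal P$, resp. $\mathcal C$. $\overline\lambda$ is spectral radius. *)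

theory Defs
  imports "HOL-Analysis.Analysis" "HOL-Probability.Probability"
begin

(* Nodes are the elements of a finite type 'n; G :: real^'n^'n with G $ i $ k = g_ik. *)

definition cmat :: "real^'n^'n \<Rightarrow> complex^'n^'n" where
  "cmat G = (\<chi> i k. complex_of_real (G $ i $ k))"

definition spectral_radius :: "real^'n^'n \<Rightarrow> real" where
  "spectral_radius G =
     Sup {cmod lam | lam. \<exists>v::complex^'n. v \<noteq> 0 \<and> cmat G *v v = lam *s v}"

definition transfer :: "real^'n^'n \<Rightarrow> 'n \<Rightarrow> 'n \<Rightarrow> complex \<Rightarrow> complex" where
  "transfer G q l z = matrix_inv (mat z - cmat G) $ l $ q"

definition hinf_norm :: "(complex \<Rightarrow> complex) \<Rightarrow> real" where
  "hinf_norm T = Sup {cmod (T z) | z. cmod z = 1}"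

definition std_normal :: "real measure" where
  "std_normal = density lborel std_normal_density"

definition Q_N :: "real \<Rightarrow> real" where
  "Q_N t = measure std_normal {t..}"

(* Q_chi2(1,t) = Pr[Y >= t], Y = Z^2 ~ chi^2(1) *)
definition Q_chi2_1 :: "real \<Rightarrow> real" where
  "Q_chi2_1 t = measure std_normal {x. x\<^sup>2 \<ge> t}"

(* mean shift: sc2 = sigma_c^2, sv2 = sigma_v^2, mu_delta = mu_2 - mu_1 *)
definition eta_s :: "real^'n^'n \<Rightarrow> 'n \<Rightarrow> nat \<Rightarrow> real \<Rightarrow> real \<Rightarrow> real \<Rightarrow> 'n \<Rightarrow> real" where
  "eta_s G q N mu_delta sc2 sv2 l =
     sqrt (real N * mu_delta\<^sup>2 * (cmod (transfer G q l 1))\<^sup>2 /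
           (sc2 * (cmod (transfer G q l 1))\<^sup>2 + sv2))"

definition P_em :: "real^'n^'n \<Rightarrow> 'n \<Rightarrow> nat \<Rightarrow> real \<Rightarrow> real \<Rightarrow> real \<Rightarrow> 'n \<Rightarrow> real" where
  "P_em G q N mu_delta sc2 sv2 l = Q_N (eta_s G q N mu_delta sc2 sv2 l / 2)"

(* covariance shift: s1 = sigma_1^2, s2 = sigma_2^2 *)
definition R_s :: "real^'n^'n \<Rightarrow> 'n \<Rightarrow> real \<Rightarrow> real \<Rightarrow> real \<Rightarrow> 'n \<Rightarrow> real" where
  "R_s G q s1 s2 sv2 l =
     (s1 * (hinf_norm (transfer G q l))\<^sup>2 + sv2) / (s2 * (hinf_norm (transfer G q l))\<^sup>2 + sv2)"

definition tau :: "real \<Rightarrow> real" where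
  "tau R = (if R = 1 then 1 else ln R / (R - 1))"

definition P_ev :: "real^'n^'n \<Rightarrow> 'n \<Rightarrow> real \<Rightarrow> real \<Rightarrow> real \<Rightarrow> 'n \<Rightarrow> real" where
  "P_ev G q s1 s2 sv2 l =
     (let R = R_s G q s1 s2 sv2 l in
      1/2 * (1 - Q_chi2_1 (tau R)) + 1/2 * Q_chi2_1 (tau R * R))"

definition edges :: "real^'n^'n \<Rightarrow> ('n \<times> 'n) set" where
  "edges G = {(i,k). G $ i $ k \<noteq> 0}"

definition dist_ge :: "real^'n^'n \<Rightarrow> 'n \<Rightarrow> 'n set \<Rightarrow> nat \<Rightarrow> bool" where
  "dist_ge G q C d = (\<forall>k<d. \<forall>c\<in>C. (q, c) \<notin> edges G ^^ k)"

definition node_cutset :: "real^'n^'n \<Rightarrow> 'n \<Rightarrow> 'n set \<Rightarrow> 'n set \<Rightarrow> 'n set \<Rightarrow> bool" where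
  "node_cutset G q S C P =
     (S \<noteq> {} \<and> C \<noteq> {} \<and> P \<noteq> {} \<and>
      S \<inter> C = {} \<and> S \<inter> P = {} \<and> C \<inter> P = {} \<and> S \<union> C \<union> P = UNIV \<and>
      q \<in> S \<and> (\<exists>d\<ge>1. dist_ge G q C d) \<and>
      (\<forall>i\<in>P. \<forall>k\<in>S. G $ i $ k = 0 \<and> G $ k $ i = 0))"

end

theory Submission
  imports Defs
begin

text \<open>Both error probabilities are decreasing functions of the DC gain \<open>T\<^sub>l(1)\<close>: for \<open>G \<ge> 0\<close>
  of spectral radius below 1, the vector \<open>r = T(1)\<close> is real and nonnegative and dominates
  \<open>|T(z)|\<close> on the unit circle, so also \<open>\<parallel>T\<^sub>l\<parallel>\<^sub>\<infinity> = r\<^sub>l\<close>. It therefore suffices to compare \<open>r\<^sub>j\<close>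
  with \<open>r\<^sub>j\<^sub>1\<close>. On the far side \<open>P\<close> of the cutset, \<open>r\<^sub>i = (\<Sum>k\<in>P. g\<^sub>i\<^sub>k r\<^sub>k) + g\<^sub>i\<^sub>j r\<^sub>j\<close>, so if the row
  sums of \<open>[G\<^sub>p\<^sub>p G\<^sub>p\<^sub>c]\<close> are at most 1, then \<open>r - r\<^sub>j\<close> is a subsolution of \<open>x = G\<^sub>p\<^sub>p x\<close> on \<open>P\<close>
  (and \<open>r\<^sub>j - r\<close> is one if they exceed 1). A maximum principle, which is where the spectral
  radius enters through a Brouwer fixed point argument, makes such subsolutions nonpositive.\<close>

section \<open>Nonnegative matrices of spectral radius below one\<close>

lemma eigenvalue_norm_le_entry_sum:
  fixes G :: "real^'n^'n"
  assumes v: "v \<noteq> 0" and ev: "cmat G *v v = lam *s v"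
  shows "cmod lam \<le> (\<Sum>i\<in>UNIV. \<Sum>k\<in>UNIV. \<bar>G$i$k\<bar>)"
proof -
  define m where "m = Max (range (\<lambda>i. cmod (v$i)))"
  have "m \<in> range (\<lambda>i. cmod (v$i))" unfolding m_def by (rule Max_in) auto
  then obtain l where l: "cmod (v$l) = m" by auto
  have m_ge: "cmod (v$k) \<le> m" for k unfolding m_def by (rule Max_ge) auto
  have "m > 0"
  proof (rule ccontr)
    assume "\<not> m > 0"
    then have "v$k = 0" for k using m_ge[of k] by (meson norm_le_zero_iff not_less order_trans)
    then show False using v by (simp add: vec_eq_iff)
  qed
  have "cmod lam * m = cmod (\<Sum>k\<in>UNIV. complex_of_real (G$l$k) * v$k)"
    using ev[THEN arg_cong[where f="\<lambda>x. x$l"]] l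
    by (simp add: matrix_vector_mult_def cmat_def norm_mult)
  also have "\<dots> \<le> (\<Sum>k\<in>UNIV. \<bar>G$l$k\<bar> * cmod (v$k))"
    using norm_sum[of "\<lambda>k. complex_of_real (G$l$k) * v$k" UNIV] by (simp add: norm_mult)
  also have "\<dots> \<le> (\<Sum>k\<in>UNIV. \<bar>G$l$k\<bar>) * m"
    unfolding sum_distrib_right by (intro sum_mono mult_left_mono m_ge) simp
  finally have "cmod lam \<le> (\<Sum>k\<in>UNIV. \<bar>G$l$k\<bar>)"
    using \<open>m > 0\<close> by (rule mult_right_le_imp_le)
  also have "\<dots> \<le> (\<Sum>i\<in>UNIV. \<Sum>k\<in>UNIV. \<bar>G$i$k\<bar>)"
    by (rule member_le_sum) (auto intro: sum_nonneg)
  finally show ?thesis .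
qed

lemma eigenvalue_norm_le_spectral_radius:
  fixes G :: "real^'n^'n"
  assumes "v \<noteq> 0" and "cmat G *v v = lam *s v"
  shows "cmod lam \<le> spectral_radius G"
  unfolding spectral_radius_def
proof (rule cSup_upper)
  show "cmod lam \<in> {cmod lam | lam. \<exists>v. v \<noteq> 0 \<and> cmat G *v v = lam *s v}"
    using assms by blast
  show "bdd_above {cmod lam | lam. \<exists>v. v \<noteq> 0 \<and> cmat G *v v = lam *s v}"
    unfolding bdd_above_def using eigenvalue_norm_le_entry_sum by blast
qed

lemma matrix_vector_mult_nonneg:
  fixes G :: "real^'n^'n"
  assumes "\<forall>i k. G$i$k \<ge> 0" and "\<forall>k. v$k \<ge> 0"
  shows "(G *v v)$i \<ge> 0"
  using assms by (simp add: matrix_vector_mult_def sum_nonneg)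

lemma matrix_vector_mult_mono:
  fixes G :: "real^'n^'n"
  assumes "\<forall>i k. G$i$k \<ge> 0" and "\<forall>k. v$k \<le> w$k"
  shows "(G *v v)$i \<le> (G *v w)$i"
  using assms by (auto simp: matrix_vector_mult_def intro!: sum_mono mult_left_mono)

definition subinvariant_simplex :: "real^'n^'n \<Rightarrow> (real^'n) set" where
  "subinvariant_simplex G =
     {v. (\<forall>i. 0 \<le> v$i) \<and> (\<Sum>i\<in>UNIV. v$i) = 1 \<and> (\<forall>i. v$i \<le> (G *v v)$i)}"

lemma compact_subinvariant_simplex: "compact (subinvariant_simplex G)"
proof -
  have "closed (subinvariant_simplex G)"
    unfolding subinvariant_simplex_def
    by (intro closed_Collect_conj closed_Collect_all closed_Collect_le closed_Collect_eq
        continuous_intros)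
  moreover have "norm v \<le> 1" if "v \<in> subinvariant_simplex G" for v
    using norm_le_l1_cart[of v] that by (simp add: subinvariant_simplex_def)
  then have "bounded (subinvariant_simplex G)" by (auto simp: bounded_iff)
  ultimately show ?thesis by (simp add: compact_eq_bounded_closed)
qed

lemma convex_subinvariant_simplex: "convex (subinvariant_simplex (G :: real^'n^'n))"
  unfolding convex_def
proof (intro ballI allI impI)
  fix x y :: "real^'n" and a b :: real
  assume x: "x \<in> subinvariant_simplex G" and y: "y \<in> subinvariant_simplex G"
    and ab: "0 \<le> a" "0 \<le> b" "a + b = 1"
  have "G *v (a *\<^sub>R x + b *\<^sub>R y) = a *\<^sub>R (G *v x) + b *\<^sub>R (G *v y)"
    by (simp add: matrix_vector_right_distrib matrix_vector_mult_scaleR)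
  then show "a *\<^sub>R x + b *\<^sub>R y \<in> subinvariant_simplex G"
    using x y ab
    by (simp add: subinvariant_simplex_def add_mono mult_left_mono sum.distrib
        sum_distrib_left[symmetric])
qed

lemma subinvariant_simplex_normalized_image:
  fixes G :: "real^'n^'n"
  assumes nonneg: "\<forall>i k. G$i$k \<ge> 0" and v: "v \<in> subinvariant_simplex G"
  defines "s \<equiv> \<Sum>i\<in>UNIV. (G *v v)$i"
  shows "s \<ge> 1" and "(1 / s) *\<^sub>R (G *v v) \<in> subinvariant_simplex G"
proof -
  have v0: "\<forall>i. 0 \<le> v$i" using v by (simp add: subinvariant_simplex_def)
  have "1 = (\<Sum>i\<in>UNIV. v$i)" using v by (simp add: subinvariant_simplex_def)
  also have "\<dots> \<le> s" unfolding s_def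
    by (rule sum_mono) (use v in \<open>simp add: subinvariant_simplex_def\<close>)
  finally show s: "s \<ge> 1" .
  have "(G *v v)$i \<le> (G *v (G *v v))$i" for i
    by (rule matrix_vector_mult_mono[OF nonneg]) (use v in \<open>simp add: subinvariant_simplex_def\<close>)
  then show "(1 / s) *\<^sub>R (G *v v) \<in> subinvariant_simplex G"
    using s matrix_vector_mult_nonneg[OF nonneg v0]
    by (simp add: subinvariant_simplex_def s_def matrix_vector_mult_scaleR divide_simps
        sum_divide_distrib[symmetric])
qed

text \<open>The eigenvector is a Brouwer fixed point of the normalised map \<open>v \<mapsto> Gv / \<Sum>(Gv)\<close>.\<close>

lemma nonneg_subinvariant_imp_eigenvector:
  fixes G :: "real^'n^'n" and u :: "real^'n"
  assumes nonneg: "\<forall>i k. G$i$k \<ge> 0" and u0: "\<forall>i. u$i \<ge> 0" and "u \<noteq> 0"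
    and sub: "\<forall>i. u$i \<le> (G *v u)$i"
  obtains v s where "v \<noteq> 0" "s \<ge> 1" "G *v v = s *\<^sub>R v"
proof -
  define K where "K = subinvariant_simplex G"
  define s where "s v = (\<Sum>i\<in>UNIV. (G *v v)$i)" for v :: "real^'n"
  define f where "f v = (1 / s v) *\<^sub>R (G *v v)" for v
  have s_ge: "v \<in> K \<Longrightarrow> s v \<ge> 1" for v
    using subinvariant_simplex_normalized_image(1)[OF nonneg] by (simp add: K_def s_def)
  have "(\<Sum>i\<in>UNIV. u$i) > 0"
  proof -
    obtain i where "u$i \<noteq> 0" using \<open>u \<noteq> 0\<close> by (auto simp: vec_eq_iff)
    then have "0 < u$i" using u0 by (metis order_le_less)
    also have "u$i \<le> (\<Sum>i\<in>UNIV. u$i)" using u0 by (intro member_le_sum) auto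
    finally show ?thesis .
  qed
  then have "(1 / (\<Sum>i\<in>UNIV. u$i)) *\<^sub>R u \<in> K"
    unfolding K_def subinvariant_simplex_def using u0 sub
    by (auto simp: matrix_vector_mult_scaleR sum_divide_distrib[symmetric] divide_right_mono)
  then have "K \<noteq> {}" by auto
  moreover have "continuous_on K f"
    unfolding f_def s_def by (intro continuous_intros) (use s_ge s_def in fastforce)
  moreover have "f \<in> K \<rightarrow> K"
    using subinvariant_simplex_normalized_image(2)[OF nonneg] by (simp add: K_def f_def s_def)
  ultimately obtain v where vK: "v \<in> K" and fv: "f v = v"
    using brouwer[OF compact_subinvariant_simplex convex_subinvariant_simplex] K_def by blast
  show thesis
  proof
    show "v \<noteq> 0" using vK by (auto simp: K_def subinvariant_simplex_def)
    show "s v \<ge> 1" using s_ge[OF vK] .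
    then have "G *v v = s v *\<^sub>R f v" by (simp add: f_def)
    with fv show "G *v v = s v *\<^sub>R v" by simp
  qed
qed

lemma spectral_radius_ge_one_if_subinvariant:
  fixes G :: "real^'n^'n" and u :: "real^'n"
  assumes "\<forall>i k. G$i$k \<ge> 0" and "\<forall>i. u$i \<ge> 0" and "u \<noteq> 0"
    and "\<forall>i. u$i \<le> (G *v u)$i"
  shows "spectral_radius G \<ge> 1"
proof -
  obtain v s where v: "v \<noteq> 0" and s: "s \<ge> 1" and Gv: "G *v v = s *\<^sub>R v"
    using nonneg_subinvariant_imp_eigenvector[OF assms] .
  define w where "w = (\<chi> i. complex_of_real (v$i))"
  have "w \<noteq> 0" using v by (auto simp: w_def vec_eq_iff)
  moreover have "(cmat G *v w)$i = complex_of_real ((G *v v)$i)" for i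
    by (simp add: matrix_vector_mult_def cmat_def w_def)
  then have "cmat G *v w = complex_of_real s *s w"
    using Gv by (simp add: vec_eq_iff w_def)
  ultimately have "cmod (complex_of_real s) \<le> spectral_radius G"
    by (rule eigenvalue_norm_le_spectral_radius)
  then show ?thesis using s by simp
qed

text \<open>Maximum principle: the positive part of a subsolution would be a nonnegative subinvariant
  vector.\<close>

lemma subsolution_nonpos:
  fixes G :: "real^'n^'n" and x :: "'n \<Rightarrow> real"
  assumes nonneg: "\<forall>i k. G$i$k \<ge> 0" and stable: "spectral_radius G < 1"
    and sub: "\<And>i. i \<in> P \<Longrightarrow> x i \<le> (\<Sum>k\<in>P. G$i$k * x k)"
    and "i \<in> P"
  shows "x i \<le> 0"
proof -
  define u where "u = (\<chi> k. if k \<in> P then max (x k) 0 else 0)"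
  have u0: "\<forall>k. u$k \<ge> 0" by (simp add: u_def)
  have "u$i \<le> (G *v u)$i" for i
  proof (cases "i \<in> P \<and> x i > 0")
    case True
    then have "u$i \<le> (\<Sum>k\<in>P. G$i$k * x k)" using sub by (simp add: u_def)
    also have "\<dots> \<le> (\<Sum>k\<in>P. G$i$k * u$k)"
      by (intro sum_mono mult_left_mono) (use nonneg in \<open>auto simp: u_def\<close>)
    also have "\<dots> \<le> (\<Sum>k\<in>UNIV. G$i$k * u$k)"
      by (rule sum_mono2) (use nonneg u0 in auto)
    finally show ?thesis by (simp add: matrix_vector_mult_def)
  next
    case False
    then have "u$i = 0" by (auto simp: u_def)
    then show ?thesis using matrix_vector_mult_nonneg[OF nonneg u0] by simp
  qed
  then have "u = 0"
    using spectral_radius_ge_one_if_subinvariant[OF nonneg u0] stable by fastforce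
  then have "u$i = 0" by simp
  then have "max (x i) 0 = 0" using \<open>i \<in> P\<close> by (simp add: u_def)
  then show ?thesis by linarith
qed

section \<open>The transfer function\<close>

lemma mat_vector_mult: "mat c *v x = c *s (x :: 'a::semiring_1^'n)"
  by (simp add: vec_eq_iff matrix_vector_mult_def mat_def if_distrib if_distribR
      cong del: if_weak_cong)

lemma invertible_mat_minus_cmat:
  fixes G :: "real^'n^'n"
  assumes stable: "spectral_radius G < 1" and z: "cmod z \<ge> 1"
  shows "invertible (mat z - cmat G)"
  unfolding invertible_left_inverse matrix_left_invertible_ker
proof (intro allI impI)
  fix x assume "(mat z - cmat G) *v x = 0"
  then have "cmat G *v x = z *s x"
    by (simp add: matrix_vector_mult_diff_rdistrib mat_vector_mult)
  then show "x = 0"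
    using eigenvalue_norm_le_spectral_radius[of x G z] stable z by fastforce
qed

text \<open>\<open>T(z)\<close> is column \<open>q\<close> of \<open>(zI - G)\<^sup>-\<^sup>1\<close>, so it solves \<open>(zI - G) T(z) = e\<^sub>q\<close>.\<close>

lemma transfer_equation:
  fixes G :: "real^'n^'n"
  assumes stable: "spectral_radius G < 1" and z: "cmod z \<ge> 1"
  shows "z * transfer G q i z =
           (\<Sum>k\<in>UNIV. complex_of_real (G$i$k) * transfer G q k z) + (if i = q then 1 else 0)"
proof -
  define M where "M = mat z - cmat G"
  define X where "X = matrix_inv M *v axis q 1"
  have "\<exists>A'. M ** A' = mat 1 \<and> A' ** M = mat 1"
    using invertible_mat_minus_cmat[OF stable z] unfolding invertible_def M_def .
  then have "M ** matrix_inv M = mat 1"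
    unfolding matrix_inv_def by (rule someI2_ex) blast
  then have "M *v X = axis q 1"
    by (simp add: X_def matrix_vector_mul_assoc)
  then have "z *s X - cmat G *v X = axis q 1"
    by (simp add: M_def matrix_vector_mult_diff_rdistrib mat_vector_mult)
  then have "z * X$i - (cmat G *v X)$i = (if i = q then 1 else 0)"
    by (auto simp: vec_eq_iff axis_def)
  moreover have "X$k = transfer G q k z" for k
    by (simp add: X_def transfer_def M_def matrix_vector_mult_def axis_def if_distrib
        cong: if_cong)
  ultimately show ?thesis
    by (simp add: matrix_vector_mult_def cmat_def algebra_simps)
qed

lemma transfer_one_components:
  fixes G :: "real^'n^'n"
  assumes "spectral_radius G < 1"
  shows "Re (transfer G q i 1) = (\<Sum>k\<in>UNIV. G$i$k * Re (transfer G q k 1)) + (if i = q then 1 else 0)"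
    and "Im (transfer G q i 1) = (\<Sum>k\<in>UNIV. G$i$k * Im (transfer G q k 1))"
  using arg_cong[OF transfer_equation[OF assms, of 1 q i], of Re]
    arg_cong[OF transfer_equation[OF assms, of 1 q i], of Im]
  by (simp_all add: Re_sum Im_sum)

lemma transfer_one_real:
  fixes G :: "real^'n^'n"
  assumes nonneg: "\<forall>i k. G$i$k \<ge> 0" and stable: "spectral_radius G < 1"
  shows "Im (transfer G q l 1) = 0"
proof -
  have "Im (transfer G q i 1) \<le> (\<Sum>k\<in>UNIV. G$i$k * Im (transfer G q k 1))"
    and "- Im (transfer G q i 1) \<le> (\<Sum>k\<in>UNIV. G$i$k * - Im (transfer G q k 1))" for i
    unfolding mult_minus_right sum_negf using transfer_one_components(2)[OF stable, of q i] by simp_all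
  then have "Im (transfer G q l 1) \<le> 0" and "- Im (transfer G q l 1) \<le> 0"
    by (intro subsolution_nonpos[OF nonneg stable, where P = UNIV]; simp)+
  then show ?thesis by simp
qed

lemma transfer_one_nonneg:
  fixes G :: "real^'n^'n"
  assumes nonneg: "\<forall>i k. G$i$k \<ge> 0" and stable: "spectral_radius G < 1"
  shows "Re (transfer G q l 1) \<ge> 0"
proof -
  have "- Re (transfer G q i 1) \<le> (\<Sum>k\<in>UNIV. G$i$k * - Re (transfer G q k 1))" for i
    unfolding mult_minus_right sum_negf using transfer_one_components(1)[OF stable, of q i] by simp
  then have "- Re (transfer G q l 1) \<le> 0"
    by (intro subsolution_nonpos[OF nonneg stable, where P = UNIV]) simp_all
  then show ?thesis by simp
qed

lemma norm_transfer_le_transfer_one: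
  fixes G :: "real^'n^'n"
  assumes nonneg: "\<forall>i k. G$i$k \<ge> 0" and stable: "spectral_radius G < 1" and z: "cmod z = 1"
  shows "cmod (transfer G q l z) \<le> Re (transfer G q l 1)"
proof -
  have "cmod (transfer G q i z) - Re (transfer G q i 1)
          \<le> (\<Sum>k\<in>UNIV. G$i$k * (cmod (transfer G q k z) - Re (transfer G q k 1)))" for i
  proof -
    have "cmod (transfer G q i z) = cmod (z * transfer G q i z)" using z by (simp add: norm_mult)
    also have "\<dots> = cmod ((\<Sum>k\<in>UNIV. complex_of_real (G$i$k) * transfer G q k z) + (if i = q then 1 else 0))"
      using transfer_equation[OF stable, of z q i] z by simp
    also have "\<dots> \<le> (\<Sum>k\<in>UNIV. cmod (complex_of_real (G$i$k) * transfer G q k z)) + (if i = q then 1 else 0)"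
      by (rule order_trans[OF norm_triangle_ineq add_mono[OF norm_sum]]) simp
    also have "\<dots> = (\<Sum>k\<in>UNIV. G$i$k * cmod (transfer G q k z)) + (if i = q then 1 else 0)"
      using nonneg by (simp add: norm_mult)
    finally show ?thesis
      using transfer_one_components(1)[OF stable, of q i]
      by (simp add: right_diff_distrib sum_subtractf)
  qed
  then have "cmod (transfer G q l z) - Re (transfer G q l 1) \<le> 0"
    by (intro subsolution_nonpos[OF nonneg stable, where P = UNIV]) simp_all
  then show ?thesis by simp
qed

lemma norm_transfer_one:
  fixes G :: "real^'n^'n"
  assumes "\<forall>i k. G$i$k \<ge> 0" and "spectral_radius G < 1"
  shows "cmod (transfer G q l 1) = Re (transfer G q l 1)"
  using transfer_one_real[OF assms] transfer_one_nonneg[OF assms] by (simp add: cmod_eq_Re)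

lemma hinf_norm_transfer:
  fixes G :: "real^'n^'n"
  assumes "\<forall>i k. G$i$k \<ge> 0" and "spectral_radius G < 1"
  shows "hinf_norm (transfer G q l) = Re (transfer G q l 1)"
  unfolding hinf_norm_def
proof (rule cSup_eq_maximum)
  show "Re (transfer G q l 1) \<in> {cmod (transfer G q l z) |z. cmod z = 1}"
    using norm_transfer_one[OF assms, of q l] by (intro CollectI exI[of _ 1]) simp
  show "x \<le> Re (transfer G q l 1)" if "x \<in> {cmod (transfer G q l z) |z. cmod z = 1}" for x
    using that norm_transfer_le_transfer_one[OF assms] by blast
qed

section \<open>Monotonicity of the error probabilities\<close>

lemma ln_ge_one_minus_inverse:
  fixes x :: real
  assumes "x > 0"
  shows "1 - 1 / x \<le> ln x"
  using ln_le_minus_one[of "1 / x"] assms by (simp add: ln_div)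

text \<open>For \<open>R > 1\<close>, \<open>tau R\<close> is the slope of the chord of \<open>ln\<close> over \<open>[1, R]\<close>, hence decreasing by
  concavity.\<close>

lemma tau_antimono:
  assumes "1 \<le> R1" "R1 \<le> R2"
  shows "tau R2 \<le> tau R1"
proof (cases "R1 = 1")
  case True
  then show ?thesis
    using ln_le_minus_one[of R2] assms by (auto simp: tau_def divide_le_eq)
next
  case False
  then have R1: "R1 > 1" and R2: "R2 > 1" using assms by auto
  have chord: "ln R2 - ln R1 \<le> (R2 - R1) / R1"
    using ln_le_minus_one[of "R2 / R1"] R1 R2 by (simp add: ln_div diff_divide_distrib)
  have "(ln R2 - ln R1) * (R1 - 1) \<le> (R2 - R1) * ((R1 - 1) / R1)"
    using mult_right_mono[OF chord, of "R1 - 1"] R1 by simp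
  also have "\<dots> \<le> (R2 - R1) * ln R1"
    using ln_ge_one_minus_inverse[of R1] R1 assms
    by (intro mult_left_mono) (simp_all add: diff_divide_distrib)
  finally have "ln R2 * (R1 - 1) \<le> ln R1 * (R2 - 1)" by (simp add: algebra_simps)
  then show ?thesis
    using R1 R2 by (simp add: tau_def divide_le_eq le_divide_eq mult.commute)
qed

lemma tau_times_mono:
  assumes "1 \<le> R1" "R1 \<le> R2"
  shows "tau R1 * R1 \<le> tau R2 * R2"
proof (cases "R1 = 1")
  case True
  then show ?thesis
    using ln_ge_one_minus_inverse[of R2] assms
    by (auto simp: tau_def le_divide_eq field_simps)
next
  case False
  then have R1: "R1 > 1" and R2: "R2 > 1" using assms by auto
  have chord: "(R2 - R1) / R2 \<le> ln R2 - ln R1"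
    using ln_ge_one_minus_inverse[of "R2 / R1"] R1 R2 by (simp add: ln_div field_simps)
  have "R1 * ln R1 * (R2 - 1) = R2 * ln R1 * (R1 - 1) + (R2 - R1) * ln R1"
    by (simp add: algebra_simps)
  also have "\<dots> \<le> R2 * ln R1 * (R1 - 1) + (R2 - R1) * (R1 - 1)"
    using ln_le_minus_one[of R1] R1 assms by (intro add_left_mono mult_left_mono) simp_all
  also have "\<dots> = R2 * (R1 - 1) * (ln R1 + (R2 - R1) / R2)"
    using R2 by (simp add: field_simps)
  also have "\<dots> \<le> R2 * (R1 - 1) * ln R2"
    using chord R1 R2 by (intro mult_left_mono) simp_all
  finally have "R1 * ln R1 * (R2 - 1) \<le> R2 * ln R2 * (R1 - 1)" by (simp add: algebra_simps)
  then show ?thesis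
    using R1 R2 by (simp add: tau_def divide_le_eq le_divide_eq field_simps)
qed

lemma prob_space_std_normal: "prob_space std_normal"
  unfolding std_normal_def by (rule prob_space_normal_density) simp

lemma measure_std_normal_mono:
  assumes "A \<subseteq> B" and "B \<in> sets borel"
  shows "measure std_normal A \<le> measure std_normal B"
  using finite_measure.finite_measure_mono[OF prob_space.finite_measure[OF prob_space_std_normal]]
    assms by (simp add: std_normal_def)

lemma Q_N_antimono: "a \<le> b \<Longrightarrow> Q_N b \<le> Q_N a"
  unfolding Q_N_def by (rule measure_std_normal_mono) auto

lemma Q_chi2_1_antimono: "a \<le> b \<Longrightarrow> Q_chi2_1 b \<le> Q_chi2_1 a"
  unfolding Q_chi2_1_def
  by (rule measure_std_normal_mono) (auto intro: borel_closed closed_Collect_le continuous_intros)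

lemma snr_mono:
  fixes a b c v :: real
  assumes "\<bar>a\<bar> \<le> \<bar>b\<bar>" "c \<ge> 0" "v > 0"
  shows "a\<^sup>2 / (c * a\<^sup>2 + v) \<le> b\<^sup>2 / (c * b\<^sup>2 + v)"
proof -
  have "a\<^sup>2 \<le> b\<^sup>2" using assms(1) by (simp add: abs_le_square_iff)
  then have "a\<^sup>2 * (c * b\<^sup>2 + v) \<le> b\<^sup>2 * (c * a\<^sup>2 + v)"
    using assms by (simp add: algebra_simps)
  moreover have "c * a\<^sup>2 + v > 0" "c * b\<^sup>2 + v > 0" using assms by (simp_all add: add_nonneg_pos)
  ultimately show ?thesis by (simp add: divide_le_eq le_divide_eq mult.commute)
qed

lemma variance_ratio_ge_one:
  fixes a s1 s2 v :: real
  assumes "s2 \<le> s1" "s2 \<ge> 0" "v > 0"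
  shows "1 \<le> (s1 * a\<^sup>2 + v) / (s2 * a\<^sup>2 + v)"
  using assms mult_right_mono[OF assms(1), of "a\<^sup>2"]
  by (simp add: le_divide_eq add_nonneg_pos)

lemma variance_ratio_mono:
  fixes a b s1 s2 v :: real
  assumes "\<bar>a\<bar> \<le> \<bar>b\<bar>" "s2 \<le> s1" "s2 \<ge> 0" "v > 0"
  shows "(s1 * a\<^sup>2 + v) / (s2 * a\<^sup>2 + v) \<le> (s1 * b\<^sup>2 + v) / (s2 * b\<^sup>2 + v)"
proof -
  have "a\<^sup>2 \<le> b\<^sup>2" using assms(1) by (simp add: abs_le_square_iff)
  then have "(s1 - s2) * a\<^sup>2 * v \<le> (s1 - s2) * b\<^sup>2 * v"
    using assms by (intro mult_right_mono mult_left_mono) auto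
  then have "(s1 * a\<^sup>2 + v) * (s2 * b\<^sup>2 + v) \<le> (s1 * b\<^sup>2 + v) * (s2 * a\<^sup>2 + v)"
    by (simp add: algebra_simps)
  moreover have "s2 * a\<^sup>2 + v > 0" "s2 * b\<^sup>2 + v > 0" using assms by (simp_all add: add_nonneg_pos)
  ultimately show ?thesis by (simp add: divide_le_eq le_divide_eq mult.commute mult.left_commute)
qed

lemma P_em_antimono:
  fixes G :: "real^'n^'n"
  assumes "\<forall>i k. G$i$k \<ge> 0" and "spectral_radius G < 1" and "sc2 > 0" and "sv2 > 0"
    and "Re (transfer G q l1 1) \<le> Re (transfer G q l2 1)"
  shows "P_em G q N mu sc2 sv2 l2 \<le> P_em G q N mu sc2 sv2 l1"
proof -
  let ?snr = "\<lambda>l. (Re (transfer G q l 1))\<^sup>2 / (sc2 * (Re (transfer G q l 1))\<^sup>2 + sv2)"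
  have "\<bar>Re (transfer G q l1 1)\<bar> \<le> \<bar>Re (transfer G q l2 1)\<bar>"
    using assms(5) by (simp add: abs_of_nonneg transfer_one_nonneg[OF assms(1,2)])
  then have "?snr l1 \<le> ?snr l2"
    using assms(3,4) by (intro snr_mono) simp_all
  then have "real N * mu\<^sup>2 * ?snr l1 \<le> real N * mu\<^sup>2 * ?snr l2"
    by (intro mult_left_mono) auto
  then show ?thesis
    unfolding P_em_def eta_s_def norm_transfer_one[OF assms(1,2)]
    by (intro Q_N_antimono divide_right_mono real_sqrt_le_mono) simp_all
qed

lemma P_ev_antimono:
  fixes G :: "real^'n^'n"
  assumes "\<forall>i k. G$i$k \<ge> 0" and "spectral_radius G < 1" and "s2 \<le> s1" "s2 \<ge> 0" "sv2 > 0"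
    and "Re (transfer G q l1 1) \<le> Re (transfer G q l2 1)"
  shows "P_ev G q s1 s2 sv2 l2 \<le> P_ev G q s1 s2 sv2 l1"
proof -
  define R1 where "R1 = R_s G q s1 s2 sv2 l1"
  define R2 where "R2 = R_s G q s1 s2 sv2 l2"
  have gain: "\<bar>Re (transfer G q l1 1)\<bar> \<le> \<bar>Re (transfer G q l2 1)\<bar>"
    using assms(6) by (simp add: abs_of_nonneg transfer_one_nonneg[OF assms(1,2)])
  have R1: "1 \<le> R1"
    unfolding R1_def R_s_def by (rule variance_ratio_ge_one[OF assms(3-5)])
  have R12: "R1 \<le> R2"
    unfolding R1_def R2_def R_s_def hinf_norm_transfer[OF assms(1,2)]
    by (rule variance_ratio_mono[OF gain assms(3-5)])
  have "Q_chi2_1 (tau R1) \<le> Q_chi2_1 (tau R2)"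
    by (rule Q_chi2_1_antimono[OF tau_antimono[OF R1 R12]])
  moreover have "Q_chi2_1 (tau R2 * R2) \<le> Q_chi2_1 (tau R1 * R1)"
    by (rule Q_chi2_1_antimono[OF tau_times_mono[OF R1 R12]])
  ultimately show ?thesis
    unfolding P_ev_def R1_def[symmetric] R2_def[symmetric] Let_def
    by (intro add_mono mult_left_mono) auto
qed

section \<open>Comparison across a singleton cutset\<close>

lemma transfer_one_cutset_equation:
  fixes G :: "real^'n^'n"
  assumes stable: "spectral_radius G < 1"
    and cut: "node_cutset G q S {j} P" and "i \<in> P"
  shows "Re (transfer G q i 1) =
           (\<Sum>k\<in>P. G$i$k * Re (transfer G q k 1)) + G$i$j * Re (transfer G q j 1)"
proof -
  have "i \<noteq> q" and "j \<notin> P" and "UNIV = S \<union> insert j P"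
    using cut \<open>i \<in> P\<close> unfolding node_cutset_def by auto
  have "G$i$k = 0" if "k \<in> S" for k
    using cut \<open>i \<in> P\<close> that unfolding node_cutset_def by blast
  then have "(\<Sum>k\<in>UNIV. G$i$k * Re (transfer G q k 1)) =
             (\<Sum>k\<in>insert j P. G$i$k * Re (transfer G q k 1))"
    using \<open>UNIV = S \<union> insert j P\<close> by (intro sum.mono_neutral_right) auto
  then have "Re (transfer G q i 1) = (\<Sum>k\<in>insert j P. G$i$k * Re (transfer G q k 1))"
    using transfer_one_components(1)[OF stable, of q i] \<open>i \<noteq> q\<close> by simp
  then show ?thesis using \<open>j \<notin> P\<close> by simp
qed

lemma transfer_one_le_at_cut_node:
  fixes G :: "real^'n^'n"
  assumes nonneg: "\<forall>i k. G$i$k \<ge> 0" and stable: "spectral_radius G < 1"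
    and cut: "node_cutset G q S {j} P" and rows: "\<forall>i\<in>P. (\<Sum>k\<in>P \<union> {j}. G$i$k) \<le> 1"
    and "j1 \<in> P"
  shows "Re (transfer G q j1 1) \<le> Re (transfer G q j 1)"
proof -
  let ?r = "\<lambda>l. Re (transfer G q l 1)"
  have "j \<notin> P" using cut unfolding node_cutset_def by blast
  have "?r i - ?r j \<le> (\<Sum>k\<in>P. G$i$k * (?r k - ?r j))" if "i \<in> P" for i
  proof -
    have "((\<Sum>k\<in>P. G$i$k) + G$i$j) * ?r j \<le> 1 * ?r j"
      using rows that \<open>j \<notin> P\<close> transfer_one_nonneg[OF nonneg stable]
      by (intro mult_right_mono) (simp_all add: add.commute)
    moreover have "(\<Sum>k\<in>P. G$i$k * (?r k - ?r j)) = (\<Sum>k\<in>P. G$i$k * ?r k) - (\<Sum>k\<in>P. G$i$k) * ?r j"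
      by (simp add: right_diff_distrib sum_subtractf sum_distrib_right)
    ultimately show ?thesis
      using transfer_one_cutset_equation[OF stable cut that] unfolding distrib_right by linarith
  qed
  then have "?r j1 - ?r j \<le> 0"
    using \<open>j1 \<in> P\<close> by (rule subsolution_nonpos[OF nonneg stable, where x = "\<lambda>l. ?r l - ?r j"])
  then show ?thesis by simp
qed

lemma transfer_one_ge_at_cut_node:
  fixes G :: "real^'n^'n"
  assumes nonneg: "\<forall>i k. G$i$k \<ge> 0" and stable: "spectral_radius G < 1"
    and cut: "node_cutset G q S {j} P" and rows: "\<forall>i\<in>P. (\<Sum>k\<in>P \<union> {j}. G$i$k) \<ge> 1"
    and "j1 \<in> P"
  shows "Re (transfer G q j 1) \<le> Re (transfer G q j1 1)"
proof -
  let ?r = "\<lambda>l. Re (transfer G q l 1)"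
  have "j \<notin> P" using cut unfolding node_cutset_def by blast
  have "?r j - ?r i \<le> (\<Sum>k\<in>P. G$i$k * (?r j - ?r k))" if "i \<in> P" for i
  proof -
    have "1 * ?r j \<le> ((\<Sum>k\<in>P. G$i$k) + G$i$j) * ?r j"
      using rows that \<open>j \<notin> P\<close> transfer_one_nonneg[OF nonneg stable]
      by (intro mult_right_mono) (simp_all add: add.commute)
    moreover have "(\<Sum>k\<in>P. G$i$k * (?r j - ?r k)) = (\<Sum>k\<in>P. G$i$k) * ?r j - (\<Sum>k\<in>P. G$i$k * ?r k)"
      by (simp add: right_diff_distrib sum_subtractf sum_distrib_right)
    ultimately show ?thesis
      using transfer_one_cutset_equation[OF stable cut that] unfolding distrib_right by linarith
  qed
  then have "?r j - ?r j1 \<le> 0"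
    using \<open>j1 \<in> P\<close> by (rule subsolution_nonpos[OF nonneg stable, where x = "\<lambda>l. ?r j - ?r l"])
  then show ?thesis by simp
qed

theorem proposition4:
  fixes G :: "real^'n^'n" and q j :: 'n and S P :: "'n set"
    and N :: nat and mu1 mu2 sc2 s1 s2 sv2 :: real
  assumes nonneg: "\<forall>i k. G $ i $ k \<ge> 0"
    and stable: "spectral_radius G < 1"
    and sv2: "sv2 > 0"
    and sc2: "sc2 > 0"
    and s12: "s1 > s2" "s2 \<ge> 0"
    and cut: "node_cutset G q S {j} P"
  shows "((\<forall>i\<in>P. (\<Sum>k\<in>P \<union> {j}. G $ i $ k) \<le> 1) \<longrightarrow>
            (\<forall>j1\<in>P. P_em G q N (mu2 - mu1) sc2 sv2 j \<le> P_em G q N (mu2 - mu1) sc2 sv2 j1 \<and>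
                      P_ev G q s1 s2 sv2 j \<le> P_ev G q s1 s2 sv2 j1))
       \<and> ((\<forall>i\<in>P. (\<Sum>k\<in>P \<union> {j}. G $ i $ k) > 1) \<longrightarrow>
            (\<forall>j1\<in>P. P_em G q N (mu2 - mu1) sc2 sv2 j \<ge> P_em G q N (mu2 - mu1) sc2 sv2 j1 \<and>
                      P_ev G q s1 s2 sv2 j \<ge> P_ev G q s1 s2 sv2 j1))"
proof -
  have s21: "s2 \<le> s1" using s12 by simp
  have errors_antimono:
    "P_em G q N (mu2 - mu1) sc2 sv2 l2 \<le> P_em G q N (mu2 - mu1) sc2 sv2 l1 \<and>
     P_ev G q s1 s2 sv2 l2 \<le> P_ev G q s1 s2 sv2 l1"
    if "Re (transfer G q l1 1) \<le> Re (transfer G q l2 1)" for l1 l2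
    using P_em_antimono[OF nonneg stable sc2 sv2 that]
      P_ev_antimono[OF nonneg stable s21 s12(2) sv2 that] by blast
  show ?thesis
  proof (intro conjI impI ballI)
    fix j1 assume "\<forall>i\<in>P. (\<Sum>k\<in>P \<union> {j}. G $ i $ k) \<le> 1" and "j1 \<in> P"
    then show "P_em G q N (mu2 - mu1) sc2 sv2 j \<le> P_em G q N (mu2 - mu1) sc2 sv2 j1"
      and "P_ev G q s1 s2 sv2 j \<le> P_ev G q s1 s2 sv2 j1"
      using errors_antimono transfer_one_le_at_cut_node[OF nonneg stable cut] by blast+
  next
    fix j1 assume "\<forall>i\<in>P. (\<Sum>k\<in>P \<union> {j}. G $ i $ k) > 1" and "j1 \<in> P"
    then show "P_em G q N (mu2 - mu1) sc2 sv2 j1 \<le> P_em G q N (mu2 - mu1) sc2 sv2 j"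
      and "P_ev G q s1 s2 sv2 j1 \<le> P_ev G q s1 s2 sv2 j"
      using errors_antimono transfer_one_ge_at_cut_node[OF nonneg stable cut, of j1]
      by (auto simp: less_imp_le)
  qed
qed

end
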